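(* Let $N'\ge2$ and let $\mu_1<0<\mu_2<\cdots<\mu_{N'}$ be real numbers. Let $\delta$ be a sufficiently small positive constant ($0<\delta\ll1$, in particular $\delta<\mu_2$) and let $0<a<1<b<c$ be constants. Define $$\bar x_1=\frac{b-1}{2b[-\mu_1+\delta]},\qquad \bar x_k(m)=\frac{\frac{c+m-1}{m}-a}{2a[\mu_k-\delta]}\quad(2\le k\le N',\ m\ge1),$$ and let $\pi_1$ satisfy $$0<\pi_1\le\frac{\frac{b-1}{2b[-\mu_1+\delta]}}{\frac{b-1}{2b[-\mu_1+\delta]}+\frac{c-a}{2a[\mu_{N'}-\delta]}}.$$ Let $g:\mathbb R^+\to\mathbb R^+$ be differentiable with $g'(\mu)\ge0$ for $\mu>0$, and let $g(\mu_1)$ be an arbitrary given real constant. For a nonempty set $S=\{k_1<\cdots<k_{m'}\}\subseteq\{2,\dots,N'\}$ define $$\Delta(S)=\frac{1-\pi_1}{\pi_1}\bar x_1-\sum_{l=1}^{m'}\bar x_{k_l}(m'),\qquad G(S)=\frac{\sum_{l=1}^{m'}\bar x_{k_l}(m')g(\mu_{k_l})+g(\mu_{k_1})\Delta(S)}{\sum_{l=1}^{m'}\bar x_{k_l}(m')+\Delta(S)},$$ and let $\mathcal K$ be the family of those $S$ with $\pi_1\le\frac{\bar x_1}{\bar x_1+\sum_{l=1}^{m'}\bar x_{k_l}(m')}$. Consider minimizing $$\Psi(x_1,x_{k_1},\dots,x_{k_{m'}})=\pi_1 g(\mu_1)+(1-\pi_1)\frac{\sum_{l=1}^{m'}x_{k_l}g(\mu_{k_l})}{\sum_{l=1}^{m'}x_{k_l}}$$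 over all $S=\{k_1<\cdots<k_{m'}\}\in\mathcal K$ and all positive reals $x_1,x_{k_1},\dots,x_{k_{m'}}$ satisfying $x_{k_l}\ge\bar x_{k_l}(m')$ for $l=1,\dots,m'$ and $\sum_{l=1}^{m'}x_{k_l}=\frac{1-\pi_1}{\pi_1}x_1\le\frac{1-\pi_1}{\pi_1}\bar x_1$. Let $S^*=\{k_1^*<\cdots<k_m^*\}\in\arg\min_{S\in\mathcal K}G(S)$. Then the minimal value is $$\Psi\big(\bar x_1,\ \bar x_{k_1^*}(m)+\Delta(S^* ),\ \bar x_{k_2^*}(m),\dots,\bar x_{k_m^*}(m)\big)=\pi_1 g(\mu_1)+(1-\pi_1)G(S^* ),$$ attained with the set $S^*$, and the corresponding portions of time $\pi_k=(1-\pi_1)x_k/\sum_{l}x_{k_l^*}$ are $$\pi_{k_1^*}=(1-\pi_1)\frac{\bar x_{k_1^*}(m)+\Delta(S^* )}{\sum_{l=1}^m\bar x_{k_l^*}(m)+\Delta(S^* )},\qquad \pi_{k_l^*}=(1-\pi_1)\frac{\bar x_{k_l^*}(m)}{\sum_{l'=1}^m\bar x_{k_{l'}^*}(m)+\Delta(S^* )}\ (l=2,\dots,m),$$ with $\pi_k=0$ for $k\in\{2,\dots,N'\}\setminus S^*$.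
   Context: Setting: graphs $G_1,\dots,G_{N'}$ on a common node set with adjacency matrices $A_l$, constant cure probability $\beta$ and infection probability $\gamma$; configuration $\mathcal C_l=(G_l,\beta,\gamma)$, $\mu_l=\beta-\gamma\lambda_1(A_l)$ where $\lambda_1(A)$ is the eigenvalue of largest modulus. $\mathcal C_1$ violates the epidemic threshold and the system must stay in it for portion of time $\pi_1$; $\mathcal C_2,\dots,\mathcal C_{N'}$ are moving-target-defense-induced configurations satisfying it, and $g(\mu_l)$ is the cost of inducing $\mathcal C_l$. The defender switches between $\mathcal C_1$ and $\mathcal C_k$, $k\in S$, by a continuous-time Markov chain with generator $Q$; $x_l=1/(-q_{ll})$ is the expected sojourn time in $\mathcal C_l$, and the portion of time in $\mathcal C_l$ is $x_l/\sum_p x_p$. The lower/upper bounds on the $x$'s are the sojourn-time conditions of a sufficient almost-sure convergence criterion, in which $\delta,a,b,c$ are constants such that there exist symmetric positive definite matrices $P_l$ with $aI<P_k<I$ for the satisfying configurations, $bI<P_1<cI$, and $\{P_l[\gamma A_l-\beta I]\}^s\le[\gamma\lambda_1(A_l)-\beta+\delta/2]P_l$. *)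

theory Defs
  imports Complex_Main
begin

text \<open>Lower bounds on the expected sojourn times.\<close>
definition xbar1 :: "real \<Rightarrow> real \<Rightarrow> real \<Rightarrow> real" where
  "xbar1 b mu1 \<delta> = (b - 1) / (2 * b * (- mu1 + \<delta>))"

definition xbark :: "real \<Rightarrow> real \<Rightarrow> real \<Rightarrow> real \<Rightarrow> nat \<Rightarrow> real" where
  "xbark a c muk \<delta> m = ((c + real m - 1) / real m - a) / (2 * a * (muk - \<delta>))"

definition Delta :: "real \<Rightarrow> real \<Rightarrow> real \<Rightarrow> (nat \<Rightarrow> real) \<Rightarrow> real \<Rightarrow> real \<Rightarrow> nat set \<Rightarrow> real" where
  "Delta a b c mu \<delta> \<pi>1 S =
     (1 - \<pi>1) / \<pi>1 * xbar1 b (mu 1) \<delta> - (\<Sum>k\<in>S. xbark a c (mu k) \<delta> (card S))"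

definition Gfun :: "real \<Rightarrow> real \<Rightarrow> real \<Rightarrow> (nat \<Rightarrow> real) \<Rightarrow> real \<Rightarrow> real \<Rightarrow> (real \<Rightarrow> real) \<Rightarrow> nat set \<Rightarrow> real" where
  "Gfun a b c mu \<delta> \<pi>1 g S =
     ((\<Sum>k\<in>S. xbark a c (mu k) \<delta> (card S) * g (mu k)) + g (mu (Min S)) * Delta a b c mu \<delta> \<pi>1 S)
     / ((\<Sum>k\<in>S. xbark a c (mu k) \<delta> (card S)) + Delta a b c mu \<delta> \<pi>1 S)"

definition Kfam :: "real \<Rightarrow> real \<Rightarrow> real \<Rightarrow> (nat \<Rightarrow> real) \<Rightarrow> real \<Rightarrow> real \<Rightarrow> nat \<Rightarrow> nat set set" where
  "Kfam a b c mu \<delta> \<pi>1 N = {S. S \<noteq> {} \<and> S \<subseteq> {2..N} \<and>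
      \<pi>1 \<le> xbar1 b (mu 1) \<delta> / (xbar1 b (mu 1) \<delta> + (\<Sum>k\<in>S. xbark a c (mu k) \<delta> (card S)))}"

text \<open>Objective Psi (x1 is an argument although the value does not depend on it).\<close>
definition Psi :: "real \<Rightarrow> (real \<Rightarrow> real) \<Rightarrow> (nat \<Rightarrow> real) \<Rightarrow> nat set \<Rightarrow> real \<Rightarrow> (nat \<Rightarrow> real) \<Rightarrow> real" where
  "Psi \<pi>1 g mu S x1 x = \<pi>1 * g (mu 1) + (1 - \<pi>1) * ((\<Sum>k\<in>S. x k * g (mu k)) / (\<Sum>k\<in>S. x k))"

definition feasible :: "real \<Rightarrow> real \<Rightarrow> real \<Rightarrow> (nat \<Rightarrow> real) \<Rightarrow> real \<Rightarrow> real \<Rightarrow> nat \<Rightarrow> nat set \<Rightarrow> real \<Rightarrow> (nat \<Rightarrow> real) \<Rightarrow> bool" where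
  "feasible a b c mu \<delta> \<pi>1 N S x1 x \<longleftrightarrow>
     S \<in> Kfam a b c mu \<delta> \<pi>1 N \<and> x1 > 0 \<and>
     (\<forall>k\<in>S. x k > 0 \<and> x k \<ge> xbark a c (mu k) \<delta> (card S)) \<and>
     (\<Sum>k\<in>S. x k) = (1 - \<pi>1) / \<pi>1 * x1 \<and>
     (1 - \<pi>1) / \<pi>1 * x1 \<le> (1 - \<pi>1) / \<pi>1 * xbar1 b (mu 1) \<delta>"

end

theory Submission
  imports Defs
begin

text \<open>
  Every admissible set \<open>S\<close> is charged with the minimal sojourn times \<open>xbark\<close>; the
  remaining budget \<open>Delta S\<close> is cheapest on the configuration with the smallest
  \<open>\<mu>\<close>, i.e. at \<open>Min S\<close>, since \<open>g\<close> is nondecreasing. Hence for fixed \<open>S\<close> the weighted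
  average of \<open>g\<close> is at least \<open>Gfun S\<close>, which is attained, and minimising over \<open>S\<close>
  gives the theorem.
\<close>

lemma nonneg_deriv_imp_mono_on_pos:
  fixes g :: "real \<Rightarrow> real"
  assumes deriv: "\<And>x. x > 0 \<Longrightarrow> \<exists>D. (g has_real_derivative D) (at x) \<and> D \<ge> 0"
  shows "mono_on {0<..} g"
proof (rule mono_onI)
  fix x y :: real
  assume "x \<in> {0<..}" "x \<le> y"
  then have "0 < x" by simp
  show "g x \<le> g y"
  proof (rule DERIV_nonneg_imp_increasing_open[OF \<open>x \<le> y\<close>])
    show "\<And>z. x < z \<Longrightarrow> z < y \<Longrightarrow> \<exists>D. DERIV g z :> D \<and> D \<ge> 0"
      using deriv \<open>0 < x\<close> by auto
    have "isCont g z" if "z \<in> {x..y}" for z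
      using deriv[of z] that \<open>0 < x\<close> DERIV_isCont by force
    then show "continuous_on {x..y} g"
      by (simp add: continuous_at_imp_continuous_on)
  qed
qed

lemma weighted_average_ge_shifted:
  fixes f x h :: "'a \<Rightarrow> real"
  assumes "finite S" "k1 \<in> S"
    and f_le_x: "\<And>k. k \<in> S \<Longrightarrow> f k \<le> x k"
    and h_min: "\<And>k. k \<in> S \<Longrightarrow> h k1 \<le> h k"
    and f_nonneg: "\<And>k. k \<in> S \<Longrightarrow> 0 \<le> f k"
    and x_pos: "0 < (\<Sum>k\<in>S. x k)"
    and budget: "(\<Sum>k\<in>S. x k) \<le> (\<Sum>k\<in>S. f k) + D"
  shows "((\<Sum>k\<in>S. f k * h k) + h k1 * D) / ((\<Sum>k\<in>S. f k) + D)
          \<le> (\<Sum>k\<in>S. x k * h k) / (\<Sum>k\<in>S. x k)"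
proof -
  define F where "F = (\<Sum>k\<in>S. f k)"
  define T where "T = (\<Sum>k\<in>S. x k)"
  define E where "E = (\<Sum>k\<in>S. f k * h k) - h k1 * F"
  \<comment> \<open>the left side is \<open>h k1 + E / (F + D)\<close>; the right side exceeds \<open>h k1 + E / T\<close> with \<open>T \<le> F + D\<close>\<close>
  have "(\<Sum>k\<in>S. f k * h k1) \<le> (\<Sum>k\<in>S. f k * h k)"
    by (intro sum_mono mult_left_mono) (auto simp: h_min f_nonneg)
  then have E_nonneg: "0 \<le> E"
    unfolding E_def F_def by (simp add: sum_distrib_left mult.commute)
  have "(\<Sum>k\<in>S. (x k - f k) * h k1) \<le> (\<Sum>k\<in>S. (x k - f k) * h k)"
    by (intro sum_mono mult_left_mono) (auto simp: h_min f_le_x)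
  then have num: "h k1 * (T - F) + (\<Sum>k\<in>S. f k * h k) \<le> (\<Sum>k\<in>S. x k * h k)"
    unfolding T_def F_def
    by (simp add: sum_distrib_left sum_subtractf algebra_simps)
  have T: "0 < T" "T \<le> F + D"
    using x_pos budget unfolding T_def F_def by auto
  have "((\<Sum>k\<in>S. f k * h k) + h k1 * D) / (F + D) = h k1 + E / (F + D)"
    using T unfolding E_def by (simp add: field_simps)
  also have "\<dots> \<le> h k1 + E / T"
    using E_nonneg T by (simp add: frac_le)
  also have "\<dots> = (h k1 * (T - F) + (\<Sum>k\<in>S. f k * h k)) / T"
    using T unfolding E_def by (simp add: field_simps)
  also have "\<dots> \<le> (\<Sum>k\<in>S. x k * h k) / T"
    using num T by (simp add: divide_right_mono)
  finally show ?thesis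
    unfolding T_def F_def .
qed

lemma xbark_pos:
  assumes "0 < a" "a < 1" "1 < c" "1 \<le> m" "\<delta> < muk"
  shows "0 < xbark a c muk \<delta> m"
proof -
  have "1 \<le> (c + real m - 1) / real m"
    using assms by (simp add: field_simps)
  then have "0 < (c + real m - 1) / real m - a"
    using assms by linarith
  then show ?thesis
    using assms unfolding xbark_def by simp
qed

locale mtd_setting =
  fixes N :: nat and mu :: "nat \<Rightarrow> real" and \<delta> a b c \<pi>1 :: real
  assumes N2: "2 \<le> N"
    and mu1: "mu 1 < 0"
    and mu_mono: "\<And>i j. 2 \<le> i \<Longrightarrow> i < j \<Longrightarrow> j \<le> N \<Longrightarrow> mu i < mu j"
    and delta: "0 < \<delta>" "\<delta> < mu 2"
    and abc: "0 < a" "a < 1" "1 < b" "b < c"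
    and pi1: "0 < \<pi>1"
      "\<pi>1 \<le> xbar1 b (mu 1) \<delta> / (xbar1 b (mu 1) \<delta> + (c - a) / (2 * a * (mu N - \<delta>)))"
begin

abbreviation "X1 \<equiv> xbar1 b (mu 1) \<delta>"
abbreviation "K \<equiv> Kfam a b c mu \<delta> \<pi>1 N"
abbreviation "xb S k \<equiv> xbark a c (mu k) \<delta> (card S)"

definition opt_point :: "nat set \<Rightarrow> nat \<Rightarrow> real" where
  "opt_point S k = (if k = Min S then xb S k + Delta a b c mu \<delta> \<pi>1 S else xb S k)"

lemma X1_pos: "0 < X1"
  using abc mu1 delta unfolding xbar1_def by simp

lemma mu_mono_le: "2 \<le> i \<Longrightarrow> i \<le> j \<Longrightarrow> j \<le> N \<Longrightarrow> mu i \<le> mu j"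
  using mu_mono[of i j] by (cases "i = j") auto

lemma delta_lt_mu: "2 \<le> k \<Longrightarrow> k \<le> N \<Longrightarrow> \<delta> < mu k"
  using mu_mono_le[of 2 k] delta by simp

lemma pi1_lt_1: "\<pi>1 < 1"
proof -
  have "0 < (c - a) / (2 * a * (mu N - \<delta>))"
    using delta_lt_mu[of N] N2 abc by simp
  then have "X1 / (X1 + (c - a) / (2 * a * (mu N - \<delta>))) < 1"
    using X1_pos by simp
  then show ?thesis
    using pi1 by linarith
qed

lemma Kfam_D:
  assumes "S \<in> K"
  shows "finite S" "S \<noteq> {}" "S \<subseteq> {2..N}"
  using assms finite_subset[of S "{2..N}"] unfolding Kfam_def by auto

lemma xb_pos:
  assumes "S \<in> K" "k \<in> S"
  shows "0 < xb S k"
proof (rule xbark_pos)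
  show "1 \<le> card S"
    using Kfam_D[OF assms(1)] assms(2) by (simp add: Suc_le_eq card_gt_0_iff)
  show "\<delta> < mu k"
    using Kfam_D(3)[OF assms(1)] assms(2) delta_lt_mu by auto
qed (use abc in auto)

lemma Kfam_sum_xb_le:
  assumes "S \<in> K"
  shows "(\<Sum>k\<in>S. xb S k) \<le> (1 - \<pi>1) / \<pi>1 * X1"
proof -
  define F where "F = (\<Sum>k\<in>S. xb S k)"
  have "0 \<le> F"
    unfolding F_def using xb_pos[OF assms] by (simp add: sum_nonneg less_imp_le)
  moreover have "\<pi>1 \<le> X1 / (X1 + F)"
    using assms unfolding Kfam_def F_def by auto
  ultimately have "\<pi>1 * (X1 + F) \<le> X1"
    using X1_pos by (simp add: pos_le_divide_eq)
  then show ?thesis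
    using pi1(1) unfolding F_def by (simp add: field_simps)
qed

lemma Delta_nonneg: "S \<in> K \<Longrightarrow> 0 \<le> Delta a b c mu \<delta> \<pi>1 S"
  using Kfam_sum_xb_le unfolding Delta_def by simp

lemma sum_xb_plus_Delta: "(\<Sum>k\<in>S. xb S k) + Delta a b c mu \<delta> \<pi>1 S = (1 - \<pi>1) / \<pi>1 * X1"
  unfolding Delta_def by simp

lemma sum_opt_point_times:
  assumes "S \<in> K"
  shows "(\<Sum>k\<in>S. opt_point S k * h k) = (\<Sum>k\<in>S. xb S k * h k) + h (Min S) * Delta a b c mu \<delta> \<pi>1 S"
proof -
  have "Min S \<in> S"
    using Kfam_D[OF assms] by simp
  have "(\<Sum>k\<in>S. opt_point S k * h k)
        = (\<Sum>k\<in>S. xb S k * h k + (if k = Min S then Delta a b c mu \<delta> \<pi>1 S * h k else 0))"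
    unfolding opt_point_def by (rule sum.cong) (auto simp: algebra_simps)
  then show ?thesis
    using Kfam_D[OF assms] \<open>Min S \<in> S\<close> by (simp add: sum.distrib mult.commute)
qed

lemma sum_opt_point:
  assumes "S \<in> K"
  shows "(\<Sum>k\<in>S. opt_point S k) = (1 - \<pi>1) / \<pi>1 * X1"
  using sum_opt_point_times[OF assms, of "\<lambda>_. 1"] sum_xb_plus_Delta by simp

lemma feasible_opt_point:
  assumes "S \<in> K"
  shows "feasible a b c mu \<delta> \<pi>1 N S X1 (opt_point S)"
  unfolding feasible_def
proof (intro conjI ballI)
  fix k assume "k \<in> S"
  then show "0 < opt_point S k" "xb S k \<le> opt_point S k"
    using xb_pos[OF assms \<open>k \<in> S\<close>] Delta_nonneg[OF assms] unfolding opt_point_def by auto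
qed (use assms X1_pos sum_opt_point in auto)

lemma Psi_opt_point:
  assumes "S \<in> K"
  shows "Psi \<pi>1 g mu S X1 (opt_point S) = \<pi>1 * g (mu 1) + (1 - \<pi>1) * Gfun a b c mu \<delta> \<pi>1 g S"
  unfolding Psi_def Gfun_def
  using sum_opt_point_times[OF assms, of "\<lambda>_. 1"] sum_opt_point_times[OF assms, of "g \<circ> mu"]
  by simp

lemma Gfun_le_average:
  assumes g_mono: "mono_on {0<..} g"
    and feas: "feasible a b c mu \<delta> \<pi>1 N S x1 x"
  shows "Gfun a b c mu \<delta> \<pi>1 g S \<le> (\<Sum>k\<in>S. x k * g (mu k)) / (\<Sum>k\<in>S. x k)"
proof -
  have S: "S \<in> K" and x: "\<And>k. k \<in> S \<Longrightarrow> 0 < x k \<and> xb S k \<le> x k"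
    and budget: "(\<Sum>k\<in>S. x k) \<le> (1 - \<pi>1) / \<pi>1 * X1"
    using feas unfolding feasible_def by auto
  note S_props = Kfam_D[OF S]
  have "Min S \<in> S"
    using S_props by simp
  have g_min: "g (mu (Min S)) \<le> g (mu k)" if "k \<in> S" for k
  proof (rule mono_onD[OF g_mono])
    have "2 \<le> Min S" "Min S \<le> k" "k \<le> N"
      using S_props \<open>Min S \<in> S\<close> that by auto
    then show "mu (Min S) \<le> mu k" "mu (Min S) \<in> {0<..}"
      using mu_mono_le delta_lt_mu delta(1) by (auto intro: less_trans)
    then show "mu k \<in> {0<..}" by auto
  qed
  show ?thesis
    unfolding Gfun_def
  proof (rule weighted_average_ge_shifted)
    show "0 < (\<Sum>k\<in>S. x k)"
      using S_props x by (intro sum_pos) auto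
    show "(\<Sum>k\<in>S. x k) \<le> (\<Sum>k\<in>S. xb S k) + Delta a b c mu \<delta> \<pi>1 S"
      using budget sum_xb_plus_Delta by simp
  qed (use S_props \<open>Min S \<in> S\<close> x g_min xb_pos[OF S] in \<open>auto intro: less_imp_le\<close>)
qed

lemma opt_point_optimal:
  assumes g_mono: "mono_on {0<..} g"
    and Sstar: "Sstar \<in> K" "\<And>S. S \<in> K \<Longrightarrow> Gfun a b c mu \<delta> \<pi>1 g Sstar \<le> Gfun a b c mu \<delta> \<pi>1 g S"
    and feas: "feasible a b c mu \<delta> \<pi>1 N S x1 x"
  shows "Psi \<pi>1 g mu Sstar X1 (opt_point Sstar) \<le> Psi \<pi>1 g mu S x1 x"
proof -
  have "S \<in> K"
    using feas unfolding feasible_def by simp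
  then have "Gfun a b c mu \<delta> \<pi>1 g Sstar \<le> (\<Sum>k\<in>S. x k * g (mu k)) / (\<Sum>k\<in>S. x k)"
    using Sstar(2) Gfun_le_average[OF g_mono feas] by fastforce
  then have "(1 - \<pi>1) * Gfun a b c mu \<delta> \<pi>1 g Sstar
             \<le> (1 - \<pi>1) * ((\<Sum>k\<in>S. x k * g (mu k)) / (\<Sum>k\<in>S. x k))"
    using pi1_lt_1 by (intro mult_left_mono) auto
  then show ?thesis
    unfolding Psi_opt_point[OF Sstar(1)] by (simp add: Psi_def)
qed

end

theorem theorem6:
  fixes N :: nat and mu :: "nat \<Rightarrow> real" and \<delta> a b c \<pi>1 :: real
    and g :: "real \<Rightarrow> real" and Sstar :: "nat set"
  assumes N2: "N \<ge> 2"
    and mu1: "mu 1 < 0" and mu2: "0 < mu 2"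
    and mu_mono: "\<And>i j. 2 \<le> i \<Longrightarrow> i < j \<Longrightarrow> j \<le> N \<Longrightarrow> mu i < mu j"
    and delta: "0 < \<delta>" "\<delta> < mu 2"
    and abc: "0 < a" "a < 1" "1 < b" "b < c"
    and pi1: "0 < \<pi>1"
      "\<pi>1 \<le> xbar1 b (mu 1) \<delta> / (xbar1 b (mu 1) \<delta> + (c - a) / (2 * a * (mu N - \<delta>)))"
    and g_pos: "\<And>x. x > 0 \<Longrightarrow> g x > 0"
    and g_deriv: "\<And>x. x > 0 \<Longrightarrow> \<exists>D. (g has_real_derivative D) (at x) \<and> D \<ge> 0"
    and Sstar_K: "Sstar \<in> Kfam a b c mu \<delta> \<pi>1 N"
    and Sstar_min: "\<And>S. S \<in> Kfam a b c mu \<delta> \<pi>1 N \<Longrightarrow> Gfun a b c mu \<delta> \<pi>1 g Sstar \<le> Gfun a b c mu \<delta> \<pi>1 g S"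
  shows
    "let m = card Sstar; k1 = Min Sstar; X1 = xbar1 b (mu 1) \<delta>;
         Dl = Delta a b c mu \<delta> \<pi>1 Sstar;
         xs = (\<lambda>k. if k = k1 then xbark a c (mu k) \<delta> m + Dl else xbark a c (mu k) \<delta> m);
         tot = (\<Sum>k\<in>Sstar. xbark a c (mu k) \<delta> m) + Dl;
         pis = (\<lambda>k. if k \<in> Sstar then (1 - \<pi>1) * xs k / (\<Sum>l\<in>Sstar. xs l) else 0)
     in feasible a b c mu \<delta> \<pi>1 N Sstar X1 xs
      \<and> (\<forall>S x1 x. feasible a b c mu \<delta> \<pi>1 N S x1 x \<longrightarrow> Psi \<pi>1 g mu Sstar X1 xs \<le> Psi \<pi>1 g mu S x1 x)
      \<and> Psi \<pi>1 g mu Sstar X1 xs = \<pi>1 * g (mu 1) + (1 - \<pi>1) * Gfun a b c mu \<delta> \<pi>1 g Sstar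
      \<and> pis k1 = (1 - \<pi>1) * (xbark a c (mu k1) \<delta> m + Dl) / tot
      \<and> (\<forall>k\<in>Sstar - {k1}. pis k = (1 - \<pi>1) * xbark a c (mu k) \<delta> m / tot)
      \<and> (\<forall>k\<in>{2..N} - Sstar. pis k = 0)"
proof -
  interpret mtd_setting N mu \<delta> a b c \<pi>1
    using N2 mu1 mu_mono delta abc pi1 by unfold_locales
  have total: "(\<Sum>k\<in>Sstar. opt_point Sstar k) = (\<Sum>k\<in>Sstar. xb Sstar k) + Delta a b c mu \<delta> \<pi>1 Sstar"
    using sum_opt_point[OF Sstar_K] sum_xb_plus_Delta by simp
  have "Min Sstar \<in> Sstar"
    using Kfam_D[OF Sstar_K] by simp
  then show ?thesis
    unfolding Let_def opt_point_def[symmetric] total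
  proof (intro conjI)
    show "feasible a b c mu \<delta> \<pi>1 N Sstar X1 (opt_point Sstar)"
      using feasible_opt_point[OF Sstar_K] .
    show "Psi \<pi>1 g mu Sstar X1 (opt_point Sstar) = \<pi>1 * g (mu 1) + (1 - \<pi>1) * Gfun a b c mu \<delta> \<pi>1 g Sstar"
      using Psi_opt_point[OF Sstar_K] .
    show "\<forall>S x1 x. feasible a b c mu \<delta> \<pi>1 N S x1 x \<longrightarrow>
        Psi \<pi>1 g mu Sstar X1 (opt_point Sstar) \<le> Psi \<pi>1 g mu S x1 x"
      using opt_point_optimal[OF nonneg_deriv_imp_mono_on_pos[OF g_deriv] Sstar_K Sstar_min] by blast
  qed (auto simp: opt_point_def)
qed

end
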